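(* Let $p$ be a prime with $\frac12 n<p\le n-3$, let $\pi\in A_n$ have a cycle of length $p$ in its disjoint cycle decomposition, and let $C$ be a conjugacy class of $S_n$. Then \begin{align*} \#\{\sigma\in A_n:~[\pi,\sigma]\in C \text{ and } \langle\pi,\sigma\rangle=A_n\} =\;&\#\{\sigma\in A_n:~[\pi,\sigma]\in C\}\\ &-\#\{\sigma\in A_n:~[\pi,\sigma]\in C \text{ and } \langle\pi,\sigma\rangle\text{ is not transitive on }\{1,\dots,n\}\}. \end{align*}
   Context: $[\pi,\sigma]=\pi^{-1}\sigma^{-1}\pi\sigma$. *)

theory Defs
  imports Complex_Main "HOL-Computational_Algebra.Primes" "HOL-Algebra.Sym_Groups" "HOL-Combinatorics.Orbits"
begin

definition commutator_Sn :: "nat \<Rightarrow> (nat \<Rightarrow> nat) \<Rightarrow> (nat \<Rightarrow> nat) \<Rightarrow> (nat \<Rightarrow> nat)" where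
  "commutator_Sn n \<pi> \<sigma> =
     inv\<^bsub>sym_group n\<^esub> \<pi> \<otimes>\<^bsub>sym_group n\<^esub> inv\<^bsub>sym_group n\<^esub> \<sigma>
       \<otimes>\<^bsub>sym_group n\<^esub> \<pi> \<otimes>\<^bsub>sym_group n\<^esub> \<sigma>"

definition is_conj_class_Sn :: "nat \<Rightarrow> (nat \<Rightarrow> nat) set \<Rightarrow> bool" where
  "is_conj_class_Sn n C \<longleftrightarrow> (\<exists>\<rho>\<in>carrier (sym_group n).
     C = {\<tau> \<otimes>\<^bsub>sym_group n\<^esub> \<rho> \<otimes>\<^bsub>sym_group n\<^esub> inv\<^bsub>sym_group n\<^esub> \<tau> | \<tau>. \<tau> \<in> carrier (sym_group n)})"

definition transitive_on_Sn :: "nat \<Rightarrow> (nat \<Rightarrow> nat) set \<Rightarrow> bool" where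
  "transitive_on_Sn n H \<longleftrightarrow> (\<forall>x\<in>{1..n}. \<forall>y\<in>{1..n}. \<exists>g\<in>H. g x = y)"

end

theory Submission
  imports Defs "HOL-Number_Theory.Cong"
begin

text \<open>
  Let \<open>G = \<langle>\<pi>, \<sigma>\<rangle> \<le> A\<^sub>n\<close> be transitive. A power \<open>c\<close> of \<open>\<pi>\<close> is a \<open>p\<close>-cycle with support \<open>D\<close>,
  and \<open>p > n/2\<close>. Translating a hypothetical block of size between \<open>2\<close> and \<open>p - 1\<close> by \<open>c\<close> would
  need more than \<open>n\<close> points, so by Jordan's argument the pointwise stabiliser of any subset of
  the complement \<open>\<Gamma>\<close> of \<open>D\<close> is transitive on the remaining points; in particular \<open>G\<close> is
  3-transitive and realises every transposition of \<open>\<Gamma>\<close>. Since \<open>p\<^sup>2\<close> does not divide \<open>n!\<close>, a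
  double coset count shows that any two subgroups of order \<open>p\<close> of the pointwise stabiliser of
  \<open>\<Gamma>\<close> are conjugate there, which yields normalisers of \<open>\<langle>c\<rangle>\<close> acting on \<open>\<Gamma>\<close> as prescribed
  transpositions. The commutator of two of them commutes with \<open>c\<close> and is a three-cycle on
  \<open>\<Gamma>\<close>, so its \<open>p\<close>-th power generates a three-cycle; by 3-transitivity \<open>G\<close> contains all
  three-cycles, i.e. \<open>G = A\<^sub>n\<close>. As \<open>A\<^sub>n\<close> is itself transitive, the generating pairs are
  exactly the transitive ones.
\<close>

section \<open>Permutation groups on a set\<close>

definition perm_group_on :: "'a set \<Rightarrow> ('a \<Rightarrow> 'a) set \<Rightarrow> bool" where
  "perm_group_on \<Omega> H \<longleftrightarrow>
     id \<in> H \<and> (\<forall>g\<in>H. \<forall>h\<in>H. g \<circ> h \<in> H) \<and> (\<forall>g\<in>H. inv' g \<in> H \<and> g permutes \<Omega>)"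

definition pointwise_stab :: "('a \<Rightarrow> 'a) set \<Rightarrow> 'a set \<Rightarrow> ('a \<Rightarrow> 'a) set" where
  "pointwise_stab H S = {h\<in>H. \<forall>x\<in>S. h x = x}"

definition transitive_on :: "'a set \<Rightarrow> ('a \<Rightarrow> 'a) set \<Rightarrow> bool" where
  "transitive_on X H \<longleftrightarrow> (\<forall>x\<in>X. \<forall>y\<in>X. \<exists>g\<in>H. g x = y)"

lemma perm_group_on_id: "perm_group_on \<Omega> H \<Longrightarrow> id \<in> H"
  by (simp add: perm_group_on_def)

lemma perm_group_on_comp: "perm_group_on \<Omega> H \<Longrightarrow> g \<in> H \<Longrightarrow> h \<in> H \<Longrightarrow> g \<circ> h \<in> H"
  by (simp add: perm_group_on_def)

lemma perm_group_on_inv: "perm_group_on \<Omega> H \<Longrightarrow> g \<in> H \<Longrightarrow> inv' g \<in> H"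
  by (simp add: perm_group_on_def)

lemma perm_group_on_permutes: "perm_group_on \<Omega> H \<Longrightarrow> g \<in> H \<Longrightarrow> g permutes \<Omega>"
  by (simp add: perm_group_on_def)

lemma perm_group_on_funpow: "perm_group_on \<Omega> H \<Longrightarrow> g \<in> H \<Longrightarrow> g ^^ k \<in> H"
  by (induction k) (auto simp: perm_group_on_id perm_group_on_comp)

lemma perm_group_on_inv_apply: "perm_group_on \<Omega> H \<Longrightarrow> g \<in> H \<Longrightarrow> inv' g (g x) = x"
  by (metis perm_group_on_permutes permutes_inverses(2))

lemma perm_group_on_apply_inv: "perm_group_on \<Omega> H \<Longrightarrow> g \<in> H \<Longrightarrow> g (inv' g x) = x"
  by (metis perm_group_on_permutes permutes_inverses(1))

lemma perm_group_on_inj: "perm_group_on \<Omega> H \<Longrightarrow> g \<in> H \<Longrightarrow> inj g"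
  by (metis perm_group_on_permutes permutes_inj)

lemma perm_group_on_in_iff: "perm_group_on \<Omega> H \<Longrightarrow> g \<in> H \<Longrightarrow> g x \<in> \<Omega> \<longleftrightarrow> x \<in> \<Omega>"
  by (metis perm_group_on_permutes permutes_in_image)

lemma perm_group_on_mono: "perm_group_on A H \<Longrightarrow> A \<subseteq> B \<Longrightarrow> perm_group_on B H"
  by (auto simp: perm_group_on_def intro: permutes_subset)

lemma pointwise_stab_subset: "pointwise_stab H S \<subseteq> H"
  by (auto simp: pointwise_stab_def)

lemma pointwise_stab_antimono: "S \<subseteq> T \<Longrightarrow> pointwise_stab H T \<subseteq> pointwise_stab H S"
  by (auto simp: pointwise_stab_def)

lemma pointwise_stab_pointwise_stab:
  "pointwise_stab (pointwise_stab H S) T = pointwise_stab H (S \<union> T)"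
  by (auto simp: pointwise_stab_def)

lemma perm_group_on_pointwise_stab:
  assumes "perm_group_on \<Omega> H"
  shows "perm_group_on (\<Omega> - S) (pointwise_stab H S)"
  unfolding perm_group_on_def
proof (intro conjI ballI)
  show "id \<in> pointwise_stab H S"
    using perm_group_on_id[OF assms] by (simp add: pointwise_stab_def)
  fix g assume g: "g \<in> pointwise_stab H S"
  then have gH: "g \<in> H" and gS: "\<forall>x\<in>S. g x = x" by (auto simp: pointwise_stab_def)
  show "g permutes \<Omega> - S"
    using perm_group_on_permutes[OF assms gH] gS by (auto simp: permutes_def)
  show "inv' g \<in> pointwise_stab H S"
    using perm_group_on_inv[OF assms gH] gS perm_group_on_inv_apply[OF assms gH]
    by (auto simp: pointwise_stab_def) metis
  fix h assume "h \<in> pointwise_stab H S"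
  then show "g \<circ> h \<in> pointwise_stab H S"
    using g perm_group_on_comp[OF assms] by (auto simp: pointwise_stab_def)
qed

lemma transitive_on_Un:
  assumes "perm_group_on \<Omega> H" "transitive_on A H\<^sub>1" "transitive_on B H\<^sub>2"
    "H\<^sub>1 \<subseteq> H" "H\<^sub>2 \<subseteq> H" "z \<in> A" "z \<in> B"
  shows "transitive_on (A \<union> B) H"
  unfolding transitive_on_def
proof (intro ballI)
  fix x y assume "x \<in> A \<union> B" "y \<in> A \<union> B"
  then obtain g\<^sub>1 g\<^sub>2 where "g\<^sub>1 \<in> H" "g\<^sub>1 x = z" "g\<^sub>2 \<in> H" "g\<^sub>2 z = y"
    using assms unfolding transitive_on_def by (metis Un_iff subsetD)
  then show "\<exists>g\<in>H. g x = y"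
    using perm_group_on_comp[OF assms(1)] by (metis comp_apply)
qed

lemma transitive_on_pointwise_stab_image:
  assumes G: "perm_group_on X H" and hH: "h \<in> H"
    and tr: "transitive_on (X - T) (pointwise_stab H T)"
  shows "transitive_on (X - h ` T) (pointwise_stab H (h ` T))"
  unfolding transitive_on_def
proof (intro ballI)
  fix u v assume u: "u \<in> X - h ` T" and v: "v \<in> X - h ` T"
  have inv_out: "inv' h w \<in> X - T" if "w \<in> X - h ` T" for w
    using that perm_group_on_in_iff[OF G hH] perm_group_on_apply_inv[OF G hH]
    by (metis Diff_iff image_eqI)
  obtain g where g: "g \<in> pointwise_stab H T" "g (inv' h u) = inv' h v"
    using tr inv_out[OF u] inv_out[OF v] unfolding transitive_on_def by blast
  let ?f = "h \<circ> g \<circ> inv' h"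
  have "?f \<in> H"
    using g(1) hH perm_group_on_comp[OF G] perm_group_on_inv[OF G]
    by (simp add: pointwise_stab_def)
  moreover have "?f (h t) = h t" if "t \<in> T" for t
    using g(1) that perm_group_on_inv_apply[OF G hH] by (simp add: pointwise_stab_def)
  ultimately have "?f \<in> pointwise_stab H (h ` T)"
    by (simp add: pointwise_stab_def)
  moreover have "?f u = v"
    using g(2) perm_group_on_apply_inv[OF G hH] by simp
  ultimately show "\<exists>g\<in>pointwise_stab H (h ` T). g u = v" by blast
qed

section \<open>Powers and cycles\<close>

lemma prime_mod_inverse:
  assumes "prime (p::nat)" "\<not> p dvd k"
  shows "\<exists>r. k * r mod p = 1"
proof -
  have "coprime k p"
    using prime_imp_coprime[OF assms] by (simp add: coprime_commute)
  then obtain r where "[k * r = Suc 0] (mod p)"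
    using cong_solve_coprime_nat by blast
  then show ?thesis
    using prime_gt_1_nat[OF assms(1)] by (auto simp: cong_def)
qed

lemma funpow_mod_period: "f ^^ p = id \<Longrightarrow> f ^^ i = f ^^ (i mod p)"
  by (rule ext) (simp add: funpow_mod_eq)

lemma funpow_prime_generates:
  assumes "f ^^ p = id" "prime p" "\<not> p dvd k"
  shows "\<exists>r. (f ^^ k) ^^ r = f"
proof -
  obtain r where "k * r mod p = 1"
    using prime_mod_inverse[OF assms(2,3)] by blast
  then have "(f ^^ k) ^^ r = f"
    using funpow_mod_period[OF assms(1), of "k * r"] by (simp add: funpow_mult)
  then show ?thesis ..
qed

definition is_cycle :: "('a \<Rightarrow> 'a) \<Rightarrow> 'a set \<Rightarrow> nat \<Rightarrow> bool" where
  "is_cycle c D p \<longleftrightarrow> (\<forall>x. x \<notin> D \<longrightarrow> c x = x) \<and> c ^^ p = id \<and> card D = p \<and> finite D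
     \<and> (\<forall>x\<in>D. c x \<in> D) \<and> (\<exists>x\<^sub>0\<in>D. \<forall>y\<in>D. \<exists>i. (c ^^ i) x\<^sub>0 = y)"

lemma is_cycle_funpow_in: "is_cycle c D p \<Longrightarrow> x \<in> D \<Longrightarrow> (c ^^ i) x \<in> D"
  by (induction i) (auto simp: is_cycle_def)

lemma is_cycle_funpow_fixes: "is_cycle c D p \<Longrightarrow> x \<notin> D \<Longrightarrow> (c ^^ i) x = x"
  by (induction i) (auto simp: is_cycle_def)

lemma is_cycle_connects:
  assumes cy: "is_cycle c D p" and "x \<in> D" "y \<in> D"
  shows "\<exists>i. (c ^^ i) x = y"
proof -
  obtain x\<^sub>0 where "\<forall>y\<in>D. \<exists>i. (c ^^ i) x\<^sub>0 = y"
    using cy by (auto simp: is_cycle_def)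
  then obtain a b where a: "(c ^^ a) x\<^sub>0 = x" and b: "(c ^^ b) x\<^sub>0 = y"
    using assms by blast
  have cp: "c ^^ p = id" and "0 < p"
    using cy assms(2) by (auto simp: is_cycle_def card_gt_0_iff)
  then have "b + (p - 1) * a + a = b + a * p"
    by (cases p) auto
  then have "c ^^ (b + (p - 1) * a) \<circ> c ^^ a = c ^^ ((b + a * p) mod p)"
    by (simp only: funpow_add[symmetric] funpow_mod_period[OF cp, symmetric])
  also have "\<dots> = c ^^ (b mod p)"
    by simp
  also have "\<dots> = c ^^ b"
    by (rule funpow_mod_period[OF cp, symmetric])
  finally have "(c ^^ (b + (p - 1) * a)) ((c ^^ a) x\<^sub>0) = (c ^^ b) x\<^sub>0"
    by (metis comp_apply)
  then show ?thesis
    using a b by blast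
qed

lemma is_cycle_funpow_neq_id:
  assumes cy: "is_cycle c D p" and a: "0 < a" "a < p"
  shows "c ^^ a \<noteq> id"
proof
  assume ca: "c ^^ a = id"
  obtain x\<^sub>0 where x\<^sub>0: "x\<^sub>0 \<in> D" using cy by (auto simp: is_cycle_def)
  have "D \<subseteq> (\<lambda>i. (c ^^ i) x\<^sub>0) ` {..<a}"
  proof
    fix y assume "y \<in> D"
    then obtain i where "(c ^^ i) x\<^sub>0 = y" using is_cycle_connects[OF cy x\<^sub>0] by blast
    then show "y \<in> (\<lambda>i. (c ^^ i) x\<^sub>0) ` {..<a}"
      using funpow_mod_period[OF ca, of i] a by auto
  qed
  then have "card D \<le> card ((\<lambda>i. (c ^^ i) x\<^sub>0) ` {..<a})"
    by (simp add: card_mono)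
  also have "\<dots> \<le> a"
    using card_image_le[of "{..<a}"] by simp
  finally have "card D \<le> a" .
  then show False using cy a by (auto simp: is_cycle_def)
qed

section \<open>Blocks and multiple transitivity\<close>

definition is_block :: "('a \<Rightarrow> 'a) set \<Rightarrow> 'a set \<Rightarrow> bool" where
  "is_block H T \<longleftrightarrow> (\<forall>h\<in>H. h ` T = T \<or> h ` T \<inter> T = {})"

lemma is_block_image:
  assumes G: "perm_group_on \<Omega> H" and blk: "is_block H T" and gH: "g \<in> H"
  shows "is_block H (g ` T)"
  unfolding is_block_def
proof
  fix h assume hH: "h \<in> H"
  let ?k = "inv' g \<circ> h \<circ> g"
  have "?k \<in> H"
    using G gH hH perm_group_on_comp perm_group_on_inv by blast
  then have "?k ` T = T \<or> ?k ` T \<inter> T = {}"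
    using blk unfolding is_block_def by blast
  moreover have "g ` (?k ` T) = h ` g ` T"
    using perm_group_on_apply_inv[OF G gH] by (auto simp: image_iff)
  ultimately show "h ` g ` T = g ` T \<or> h ` g ` T \<inter> g ` T = {}"
    using perm_group_on_inj[OF G gH] by (metis image_Int image_empty)
qed

lemma image_stable_funpow_prime:
  assumes "c ^^ p = id" "prime p" "\<not> p dvd k" "(c ^^ k) ` B = B"
  shows "c ` B = B"
proof -
  obtain r where r: "(c ^^ k) ^^ r = c"
    using funpow_prime_generates[OF assms(1-3)] by blast
  have "((c ^^ k) ^^ r) ` B = B" for r
    by (induction r) (simp, metis assms(4) funpow.simps(2) image_comp)
  then show ?thesis
    using r by metis
qed

lemma cycle_translates_disjoint:
  assumes G: "perm_group_on \<Omega> H" and blk: "is_block H B" and cH: "c \<in> H"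
    and cy: "is_cycle c D p" and p: "prime p" and moves: "c ` B \<noteq> B"
    and ij: "i < j" "j < p"
  shows "(c ^^ i) ` B \<inter> (c ^^ j) ` B = {}"
proof -
  have cp: "c ^^ p = id" using cy by (simp add: is_cycle_def)
  have "\<not> p dvd (j - i)"
    using ij by (auto dest: dvd_imp_le)
  then have "(c ^^ (j - i)) ` B \<noteq> B"
    using image_stable_funpow_prime[OF cp p] moves by blast
  then have "(c ^^ (j - i)) ` B \<inter> B = {}"
    using blk perm_group_on_funpow[OF G cH] unfolding is_block_def by blast
  then have "(c ^^ i) ` ((c ^^ (j - i)) ` B \<inter> B) = {}" by simp
  moreover have "(c ^^ j) ` B = (c ^^ i) ` (c ^^ (j - i)) ` B"
    using ij by (simp add: image_comp funpow_add[symmetric])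
  ultimately show ?thesis
    using perm_group_on_inj[OF G perm_group_on_funpow[OF G cH]]
    by (metis Int_commute image_Int)
qed

text \<open>If the translates of a block \<open>T\<close> with \<open>2 \<le> |T| < p\<close> under a \<open>p\<close>-cycle are not all equal, they are \<open>p\<close>
  pairwise disjoint sets and need at least \<open>2p\<close> points; if they are all equal, the block
  contains the support of the cycle.\<close>

lemma not_is_block:
  assumes G: "perm_group_on X H" and fin: "finite X" and tr: "transitive_on X H"
    and cH: "c \<in> H" and cy: "is_cycle c D p" and DX: "D \<subseteq> X" and p: "prime p"
    and X: "card X < 2 * p" and TX: "T \<subseteq> X" and T: "2 \<le> card T" "card T < p"
  shows "\<not> is_block H T"
proof
  assume blk: "is_block H T"
  obtain t where t: "t \<in> T" using T by fastforce
  obtain x\<^sub>0 where x\<^sub>0: "x\<^sub>0 \<in> D" using cy by (auto simp: is_cycle_def)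
  obtain h where hH: "h \<in> H" and ht: "h t = x\<^sub>0"
    using tr t TX x\<^sub>0 DX unfolding transitive_on_def by blast
  define B where "B = h ` T"
  have cpH: "c ^^ i \<in> H" for i
    using perm_group_on_funpow[OF G cH] .
  have card_translate: "card ((c ^^ i) ` B) = card T" for i
  proof -
    have "inj (c ^^ i \<circ> h)"
      using perm_group_on_inj[OF G perm_group_on_comp[OF G cpH hH]] .
    then have "inj_on (c ^^ i \<circ> h) T"
      by (rule inj_on_subset) simp
    then show ?thesis
      unfolding B_def image_comp by (rule card_image)
  qed
  have translate_subset: "(c ^^ i) ` B \<subseteq> X" for i
    using TX perm_group_on_in_iff[OF G cpH] perm_group_on_in_iff[OF G hH] by (auto simp: B_def)
  show False
  proof (cases "c ` B = B")
    case True
    then have "(c ^^ i) ` B = B" for i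
      by (induction i) (simp, metis True funpow.simps(2) image_comp)
    then have "D \<subseteq> B"
      using is_cycle_connects[OF cy x\<^sub>0] ht t B_def by blast
    then have "card D \<le> card T"
      using finite_subset[OF translate_subset[of 0] fin] card_translate[of 0]
      by simp (metis card_mono)
    then show False using cy T by (simp add: is_cycle_def)
  next
    case False
    have disjoint: "(c ^^ i) ` B \<inter> (c ^^ j) ` B = {}" if "i < p" "j < p" "i \<noteq> j" for i j
      using cycle_translates_disjoint[OF G is_block_image[OF G blk hH] cH cy p False[unfolded B_def]]
        that unfolding B_def by (metis Int_commute nat_neq_iff)
    have "card (\<Union>i<p. (c ^^ i) ` B) = (\<Sum>i<p. card ((c ^^ i) ` B))"
      using disjoint finite_subset[OF translate_subset fin] by (intro card_UN_disjoint) auto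
    also have "\<dots> = p * card T"
      using card_translate by simp
    moreover have "card (\<Union>i<p. (c ^^ i) ` B) \<le> card X"
      using translate_subset fin by (intro card_mono) auto
    ultimately have "p * card T \<le> card X"
      by simp
    moreover have "2 * p \<le> p * card T"
      using T(1) by simp
    ultimately show False using X by linarith
  qed
qed

lemma transitive_on_pointwise_stab_Int_image:
  assumes G: "perm_group_on X H" and fin: "finite X" and hH: "h \<in> H" and TX: "T \<subseteq> X"
    and tr: "transitive_on (X - T) (pointwise_stab H T)" and small: "2 * card T < card X"
  shows "transitive_on (X - (T \<inter> h ` T)) (pointwise_stab H (T \<inter> h ` T))"
proof -
  have "card (T \<union> h ` T) \<le> card T + card (h ` T)"
    by (rule card_Un_le)
  also have "\<dots> < card X"
    using card_image_le[OF finite_subset[OF TX fin], of h] small by linarith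
  finally have "\<not> X \<subseteq> T \<union> h ` T"
    using card_mono[of "T \<union> h ` T" X] finite_subset[OF TX fin] by auto
  then obtain z where z: "z \<in> X - T" "z \<in> X - h ` T"
    by blast
  have "pointwise_stab H T \<subseteq> pointwise_stab H (T \<inter> h ` T)"
    "pointwise_stab H (h ` T) \<subseteq> pointwise_stab H (T \<inter> h ` T)"
    by (simp_all add: pointwise_stab_antimono)
  then have "transitive_on ((X - T) \<union> (X - h ` T)) (pointwise_stab H (T \<inter> h ` T))"
    using transitive_on_Un[OF perm_group_on_pointwise_stab[OF G] tr
        transitive_on_pointwise_stab_image[OF G hH tr]] z by blast
  moreover have "(X - T) \<union> (X - h ` T) = X - (T \<inter> h ` T)" by blast
  ultimately show ?thesis by simp
qed

lemma transitive_on_cycle_support: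
  assumes G: "perm_group_on X H" and cH: "c \<in> H" and cy: "is_cycle c D p"
  shows "transitive_on (X - (X - D)) (pointwise_stab H (X - D))"
proof -
  have "c ^^ i \<in> pointwise_stab H (X - D)" for i
    using perm_group_on_funpow[OF G cH] is_cycle_funpow_fixes[OF cy]
    by (simp add: pointwise_stab_def)
  then show ?thesis
    unfolding transitive_on_def using is_cycle_connects[OF cy] by (metis Diff_iff)
qed

text \<open>Jordan's argument: among the subsets \<open>T\<close> whose complement is an orbit of their pointwise
  stabiliser, one of least size is a single point, since otherwise \<open>T\<close> is not a block and
  intersecting it with a suitable translate gives a smaller such set.\<close>

lemma transitive_on_point_stab:
  assumes G: "perm_group_on X H" and fin: "finite X" and tr: "transitive_on X H"
    and cH: "c \<in> H" and cy: "is_cycle c D p" and DX: "D \<subset> X" and p: "prime p"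
    and X: "card X < 2 * p" and \<alpha>: "\<alpha> \<in> X"
  shows "transitive_on (X - {\<alpha>}) (pointwise_stab H {\<alpha>})"
proof -
  define P where "P T \<longleftrightarrow> T \<subseteq> X \<and> T \<noteq> {} \<and> 2 * card T < card X
    \<and> transitive_on (X - T) (pointwise_stab H T)" for T
  have "P (X - D)"
    unfolding P_def
  proof (intro conjI)
    have "card D = p" using cy by (simp add: is_cycle_def)
    moreover have "card D \<le> card X"
      using DX fin by (simp add: card_mono)
    moreover have "card (X - D) = card X - card D"
      using DX fin by (meson card_Diff_subset finite_subset psubset_imp_subset)
    ultimately show "2 * card (X - D) < card X"
      using X by linarith
    show "transitive_on (X - (X - D)) (pointwise_stab H (X - D))"
      using transitive_on_cycle_support[OF G cH cy] DX by auto
  qed (use DX in auto)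
  then obtain T where PT: "P T" and minT: "\<And>T'. P T' \<Longrightarrow> card T \<le> card T'"
    using ex_has_least_nat[of P "X - D" card] by blast
  then have TX: "T \<subseteq> X" and trT: "transitive_on (X - T) (pointwise_stab H T)"
    and T0: "T \<noteq> {}" and TX2: "2 * card T < card X"
    by (auto simp: P_def)
  have finT: "finite T"
    using finite_subset[OF TX fin] .
  have "card T = 1"
  proof (rule ccontr)
    assume "card T \<noteq> 1"
    moreover have "card T \<noteq> 0"
      using finT T0 by simp
    ultimately have T: "2 \<le> card T" "card T < p"
      using TX2 X by linarith+
    obtain h where hH: "h \<in> H" and moved: "h ` T \<noteq> T" and meets: "h ` T \<inter> T \<noteq> {}"
      using not_is_block[OF G fin tr cH cy _ p X TX T] DX unfolding is_block_def by blast
    have "card (h ` T) = card T"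
      using perm_group_on_inj[OF G hH] by (simp add: card_image inj_on_subset)
    then have "\<not> T \<subseteq> h ` T"
      using card_seteq[of "h ` T" T] finT moved by auto
    then have "card (T \<inter> h ` T) < card T"
      using finT by (intro psubset_card_mono) auto
    moreover have "P (T \<inter> h ` T)"
      unfolding P_def using TX TX2 meets \<open>card (T \<inter> h ` T) < card T\<close>
        transitive_on_pointwise_stab_Int_image[OF G fin hH TX trT TX2] by auto
    ultimately show False
      using minT[of "T \<inter> h ` T"] by linarith
  qed
  then obtain a where "T = {a}" "a \<in> X"
    using TX by (metis card_1_singletonE insert_subset)
  moreover obtain h where "h \<in> H" "h a = \<alpha>"
    using tr \<open>a \<in> X\<close> \<alpha> unfolding transitive_on_def by blast
  moreover have "transitive_on (X - h ` T) (pointwise_stab H (h ` T))"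
    using transitive_on_pointwise_stab_image[OF G \<open>h \<in> H\<close> trT] .
  ultimately show ?thesis
    by simp
qed

lemma transitive_on_pointwise_stab_off_cycle:
  assumes G: "perm_group_on \<Omega> H" and fin: "finite \<Omega>" and tr: "transitive_on \<Omega> H"
    and cH: "c \<in> H" and cy: "is_cycle c D p" and D\<Omega>: "D \<subseteq> \<Omega>" and p: "prime p"
    and \<Omega>: "card \<Omega> < 2 * p" and S: "S \<subseteq> \<Omega> - D"
  shows "transitive_on (\<Omega> - S) (pointwise_stab H S)"
  using finite_subset[OF S finite_Diff[OF fin]] S
proof (induction S rule: finite_induct)
  case empty
  then show ?case
    using tr by (simp add: pointwise_stab_def)
next
  case (insert \<alpha> S)
  have "transitive_on (\<Omega> - S - {\<alpha>}) (pointwise_stab (pointwise_stab H S) {\<alpha>})"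
  proof (rule transitive_on_point_stab[OF perm_group_on_pointwise_stab[OF G]])
    show "transitive_on (\<Omega> - S) (pointwise_stab H S)"
      using insert by blast
    show "c \<in> pointwise_stab H S"
      using cH cy insert.prems by (auto simp: pointwise_stab_def is_cycle_def)
    show "card (\<Omega> - S) < 2 * p"
      using \<Omega> fin by (meson Diff_subset card_mono le_less_trans)
    show "D \<subset> \<Omega> - S"
      using D\<Omega> insert by auto
  qed (use fin cy p insert in auto)
  moreover have "\<Omega> - S - {\<alpha>} = \<Omega> - insert \<alpha> S"
    by blast
  ultimately show ?case
    by (simp add: pointwise_stab_pointwise_stab)
qed

lemma ex_transpose_on:
  assumes G: "perm_group_on \<Omega> H"
    and tr: "\<And>S. S \<subseteq> \<Gamma> \<Longrightarrow> transitive_on (\<Omega> - S) (pointwise_stab H S)"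
    and \<Gamma>: "\<Gamma> \<subseteq> \<Omega>" and ab: "a \<in> \<Gamma>" "b \<in> \<Gamma>" "a \<noteq> b"
  shows "\<exists>g\<in>H. \<forall>\<gamma>\<in>\<Gamma>. g \<gamma> = transpose a b \<gamma>"
proof -
  define S where "S = \<Gamma> - {a, b}"
  obtain f\<^sub>1 where f\<^sub>1: "f\<^sub>1 \<in> pointwise_stab H S" "f\<^sub>1 a = b"
    using tr[of S] ab \<Gamma> unfolding S_def transitive_on_def by blast
  then have f\<^sub>1H: "f\<^sub>1 \<in> H" by (simp add: pointwise_stab_def)
  define y where "y = f\<^sub>1 b"
  have "y \<noteq> b"
    using f\<^sub>1(2) ab(3) injD[OF perm_group_on_inj[OF G f\<^sub>1H], of a b] y_def by auto
  moreover have "y \<notin> S"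
    using f\<^sub>1 ab(2) injD[OF perm_group_on_inj[OF G f\<^sub>1H], of y b]
    unfolding y_def S_def pointwise_stab_def by auto
  moreover have "y \<in> \<Omega>"
    using perm_group_on_in_iff[OF G f\<^sub>1H] ab(2) \<Gamma> y_def by auto
  ultimately have "y \<in> \<Omega> - insert b S"
    by blast
  moreover have "a \<in> \<Omega> - insert b S"
    using ab \<Gamma> S_def by auto
  moreover have "insert b S \<subseteq> \<Gamma>"
    using ab S_def by auto
  ultimately obtain f\<^sub>2 where f\<^sub>2: "f\<^sub>2 \<in> pointwise_stab H (insert b S)" "f\<^sub>2 y = a"
    using tr unfolding transitive_on_def by blast
  then have "f\<^sub>2 \<circ> f\<^sub>1 \<in> H"
    using perm_group_on_comp[OF G _ f\<^sub>1H] by (simp add: pointwise_stab_def)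
  moreover have "(f\<^sub>2 \<circ> f\<^sub>1) \<gamma> = transpose a b \<gamma>" if "\<gamma> \<in> \<Gamma>" for \<gamma>
    using f\<^sub>1 f\<^sub>2 that ab unfolding y_def S_def pointwise_stab_def transpose_def by auto
  ultimately show ?thesis by blast
qed

lemma three_transitive:
  assumes G: "perm_group_on \<Omega> H"
    and tr: "\<And>S. S \<subseteq> \<Gamma> \<Longrightarrow> transitive_on (\<Omega> - S) (pointwise_stab H S)"
    and \<Gamma>: "\<Gamma> \<subseteq> \<Omega>" and abc: "a \<in> \<Gamma>" "b \<in> \<Gamma>" "c \<in> \<Gamma>" "a \<noteq> b" "a \<noteq> c" "b \<noteq> c"
    and xyz: "x \<in> \<Omega>" "y \<in> \<Omega>" "z \<in> \<Omega>" "x \<noteq> y" "x \<noteq> z" "y \<noteq> z"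
  shows "\<exists>f\<in>H. f x = a \<and> f y = b \<and> f z = c"
proof -
  obtain g\<^sub>1 where g\<^sub>1: "g\<^sub>1 \<in> H" "g\<^sub>1 x = a"
    using tr[of "{}"] xyz(1) abc(1) \<Gamma> unfolding transitive_on_def pointwise_stab_def by blast
  then have "g\<^sub>1 y \<noteq> a" "g\<^sub>1 z \<noteq> a" "g\<^sub>1 z \<noteq> g\<^sub>1 y"
    using xyz injD[OF perm_group_on_inj[OF G g\<^sub>1(1)]] by metis+
  moreover have "g\<^sub>1 y \<in> \<Omega>" "g\<^sub>1 z \<in> \<Omega>"
    using xyz perm_group_on_in_iff[OF G g\<^sub>1(1)] by auto
  ultimately obtain g\<^sub>2 where g\<^sub>2: "g\<^sub>2 \<in> pointwise_stab H {a}" "g\<^sub>2 (g\<^sub>1 y) = b"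
    using tr[of "{a}"] abc \<Gamma> unfolding transitive_on_def by blast
  then have g\<^sub>2H: "g\<^sub>2 \<in> H" and g\<^sub>2a: "g\<^sub>2 a = a"
    by (auto simp: pointwise_stab_def)
  have "g\<^sub>2 (g\<^sub>1 z) \<noteq> a" "g\<^sub>2 (g\<^sub>1 z) \<noteq> b"
    using g\<^sub>2 g\<^sub>2a \<open>g\<^sub>1 z \<noteq> a\<close> \<open>g\<^sub>1 z \<noteq> g\<^sub>1 y\<close> injD[OF perm_group_on_inj[OF G g\<^sub>2H]] by metis+
  moreover have "g\<^sub>2 (g\<^sub>1 z) \<in> \<Omega>"
    using \<open>g\<^sub>1 z \<in> \<Omega>\<close> perm_group_on_in_iff[OF G g\<^sub>2H] by auto
  ultimately obtain g\<^sub>3 where g\<^sub>3: "g\<^sub>3 \<in> pointwise_stab H {a, b}" "g\<^sub>3 (g\<^sub>2 (g\<^sub>1 z)) = c"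
    using tr[of "{a, b}"] abc \<Gamma> unfolding transitive_on_def by blast
  then have "g\<^sub>3 \<in> H" "g\<^sub>3 a = a" "g\<^sub>3 b = b"
    by (auto simp: pointwise_stab_def)
  then have "g\<^sub>3 \<circ> g\<^sub>2 \<circ> g\<^sub>1 \<in> H \<and> (g\<^sub>3 \<circ> g\<^sub>2 \<circ> g\<^sub>1) x = a \<and> (g\<^sub>3 \<circ> g\<^sub>2 \<circ> g\<^sub>1) y = b
      \<and> (g\<^sub>3 \<circ> g\<^sub>2 \<circ> g\<^sub>1) z = c"
    using g\<^sub>1 g\<^sub>2 g\<^sub>2H g\<^sub>2a g\<^sub>3 perm_group_on_comp[OF G] by simp
  then show ?thesis by blast
qed

section \<open>Conjugate subgroups of prime order\<close>

lemma funpow_conj: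
  assumes "h \<circ> h' = id" "h' \<circ> h = id"
  shows "(h' \<circ> f \<circ> h) ^^ r = h' \<circ> f ^^ r \<circ> h"
proof (induction r)
  case 0
  then show ?case using assms(2) by simp
next
  case (Suc r)
  have "(h' \<circ> f \<circ> h) ^^ Suc r = (h' \<circ> f \<circ> h) \<circ> (h' \<circ> f ^^ r \<circ> h)"
    by (simp only: funpow.simps(2) Suc.IH)
  also have "\<dots> = h' \<circ> f \<circ> (h \<circ> h') \<circ> f ^^ r \<circ> h"
    by (simp only: comp_assoc)
  also have "\<dots> = h' \<circ> f ^^ Suc r \<circ> h"
    using assms(1) by (simp add: comp_assoc)
  finally show ?case .
qed

lemma funpow_inverse_period:
  assumes "f ^^ p = id" "0 < p"
  shows "f ^^ ((p - 1) * a) \<circ> f ^^ a = id"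
proof -
  have "(p - 1) * a + a = p * a"
    using assms(2) by (cases p) auto
  then have "f ^^ ((p - 1) * a) \<circ> f ^^ a = (f ^^ p) ^^ a"
    by (simp only: funpow_add[symmetric] funpow_mult)
  then show ?thesis
    using assms(1) by simp
qed

lemma mod_eq_0_between:
  fixes i i' p :: nat
  assumes "i < p" "i' < p" "(i + (p - i')) mod p = 0"
  shows "i = i'"
proof -
  obtain q where q: "i + (p - i') = p * q"
    using assms(3) by (auto simp: mod_eq_0_iff_dvd elim: dvdE)
  moreover have "0 < i + (p - i')" "i + (p - i') < p * 2"
    using assms(1,2) by auto
  moreover have "p * 2 \<le> p * q" if "2 \<le> q"
    using that by simp
  ultimately have "q \<noteq> 0" "\<not> 2 \<le> q"
    by auto
  then have "q = 1"
    by linarith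
  then show ?thesis
    using q assms(1,2) by simp
qed

definition double_coset :: "('a \<Rightarrow> 'a) \<Rightarrow> ('a \<Rightarrow> 'a) \<Rightarrow> ('a \<Rightarrow> 'a) \<Rightarrow> ('a \<Rightarrow> 'a) set" where
  "double_coset d k c = {d ^^ i \<circ> k \<circ> c ^^ j | i j. True}"

lemma double_coset_self: "k \<in> double_coset d k c"
proof -
  have "k = d ^^ 0 \<circ> k \<circ> c ^^ 0"
    by simp
  then show ?thesis
    unfolding double_coset_def by blast
qed

lemma double_coset_subset:
  assumes "k' \<in> double_coset d k c"
  shows "double_coset d k' c \<subseteq> double_coset d k c"
proof
  fix x assume "x \<in> double_coset d k' c"
  then obtain i j a b where "x = d ^^ i \<circ> (d ^^ a \<circ> k \<circ> c ^^ b) \<circ> c ^^ j"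
    using assms unfolding double_coset_def by blast
  then have "x = d ^^ (i + a) \<circ> k \<circ> c ^^ (b + j)"
    by (simp add: funpow_add comp_assoc)
  then show "x \<in> double_coset d k c"
    unfolding double_coset_def by blast
qed

lemma double_coset_eq:
  assumes d: "d ^^ p = id" and c: "c ^^ p = id" and "0 < p"
    and k': "k' \<in> double_coset d k c"
  shows "double_coset d k' c = double_coset d k c"
proof
  obtain a b where k'_eq: "k' = d ^^ a \<circ> k \<circ> c ^^ b"
    using k' unfolding double_coset_def by blast
  have "d ^^ ((p - 1) * a) \<circ> k' \<circ> c ^^ ((p - 1) * b)
      = (d ^^ ((p - 1) * a) \<circ> d ^^ a) \<circ> k \<circ> (c ^^ b \<circ> c ^^ ((p - 1) * b))"
    unfolding k'_eq by (simp add: comp_assoc)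
  also have "\<dots> = k"
    using funpow_inverse_period[OF d \<open>0 < p\<close>, of a] funpow_inverse_period[OF c \<open>0 < p\<close>, of b]
    by (simp add: funpow_add[symmetric] add.commute)
  finally have "k \<in> double_coset d k' c"
    unfolding double_coset_def by (blast intro: sym)
  then show "double_coset d k c \<subseteq> double_coset d k' c"
    by (rule double_coset_subset)
qed (rule double_coset_subset[OF k'])

lemma double_coset_image:
  assumes d: "d ^^ p = id" and c: "c ^^ p = id" and "0 < p"
  shows "double_coset d k c = (\<lambda>(i, j). d ^^ i \<circ> k \<circ> c ^^ j) ` ({..<p} \<times> {..<p})"
proof
  show "double_coset d k c \<subseteq> (\<lambda>(i, j). d ^^ i \<circ> k \<circ> c ^^ j) ` ({..<p} \<times> {..<p})"
  proof
    fix x assume "x \<in> double_coset d k c"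
    then obtain i j where "x = d ^^ i \<circ> k \<circ> c ^^ j"
      unfolding double_coset_def by blast
    then have "x = d ^^ (i mod p) \<circ> k \<circ> c ^^ (j mod p)"
      using funpow_mod_period[OF c, of j] funpow_mod_period[OF d, of i] by simp
    moreover have "(i mod p, j mod p) \<in> {..<p} \<times> {..<p}"
      using \<open>0 < p\<close> by simp
    ultimately show "x \<in> (\<lambda>(i, j). d ^^ i \<circ> k \<circ> c ^^ j) ` ({..<p} \<times> {..<p})"
      by force
  qed
qed (auto simp: double_coset_def)

lemma inj_on_double_coset_param:
  assumes kp: "k permutes \<Omega>" and d: "d ^^ p = id" and c: "c ^^ p = id"
    and c_order: "\<And>a. 0 < a \<Longrightarrow> a < p \<Longrightarrow> c ^^ a \<noteq> id" and p: "prime p"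
    and no_conj: "\<And>e. inv' k \<circ> d \<circ> k \<noteq> c ^^ e"
  shows "inj_on (\<lambda>(i, j). d ^^ i \<circ> k \<circ> c ^^ j) ({..<p} \<times> {..<p})"
proof (rule inj_onI, clarify)
  fix i j i' j' assume ij: "i < p" "j < p" "i' < p" "j' < p"
    and eq: "d ^^ i \<circ> k \<circ> c ^^ j = d ^^ i' \<circ> k \<circ> c ^^ j'"
  define A where "A = (i + (p - i')) mod p"
  define B where "B = (j' + (p - j)) mod p"
  have "d ^^ (p - i') \<circ> (d ^^ i \<circ> k \<circ> c ^^ j) \<circ> c ^^ (p - j)
      = d ^^ (p - i') \<circ> (d ^^ i' \<circ> k \<circ> c ^^ j') \<circ> c ^^ (p - j)"
    using eq by simp
  then have "d ^^ (p - i' + i) \<circ> k \<circ> c ^^ (j + (p - j))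
      = d ^^ (p - i' + i') \<circ> k \<circ> c ^^ (j' + (p - j))"
    by (simp add: funpow_add comp_assoc)
  moreover have "j + (p - j) = p" "p - i' + i' = p" "p - i' + i = i + (p - i')"
    using ij by auto
  ultimately have "d ^^ A \<circ> k = k \<circ> c ^^ B"
    unfolding A_def B_def using c d
    by (simp add: funpow_mod_period[OF c, symmetric] funpow_mod_period[OF d, symmetric])
  then have AB: "inv' k \<circ> d ^^ A \<circ> k = c ^^ B"
    using permutes_inv_o(2)[OF kp] by (metis comp_assoc comp_id id_comp)
  show "i = i' \<and> j = j'"
  proof (cases "A = 0")
    case True
    then have "c ^^ B = id"
      using AB permutes_inv_o(2)[OF kp] by simp
    then have "B = 0"
      using c_order[of B] p B_def by (metis mod_less_divisor neq0_conv prime_gt_0_nat)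
    then show ?thesis
      using True ij mod_eq_0_between unfolding A_def B_def by metis
  next
    case False
    have "A < p"
      using p unfolding A_def by (simp add: prime_gt_0_nat)
    then have "\<not> p dvd A"
      using False by (auto dest: dvd_imp_le)
    then obtain r where r: "(d ^^ A) ^^ r = d"
      using funpow_prime_generates[OF d p] by blast
    have "inv' k \<circ> d \<circ> k = (inv' k \<circ> d ^^ A \<circ> k) ^^ r"
      using funpow_conj[OF permutes_inv_o[OF kp]] r by simp
    also have "\<dots> = c ^^ (B * r)"
      by (simp add: AB funpow_mult)
    finally show ?thesis
      using no_conj by blast
  qed
qed

text \<open>If no conjugate of \<open>d\<close> lies in \<open>\<langle>c\<rangle>\<close>, every double coset \<open>\<langle>d\<rangle>k\<langle>c\<rangle>\<close> in \<open>K\<close>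
  has \<open>p\<^sup>2\<close> elements.\<close>

lemma ex_conj_into_cyclic:
  assumes G: "perm_group_on \<Omega> K" and fin: "finite K" and cK: "c \<in> K" and dK: "d \<in> K"
    and c: "c ^^ p = id" and d: "d ^^ p = id"
    and c_order: "\<And>a. 0 < a \<Longrightarrow> a < p \<Longrightarrow> c ^^ a \<noteq> id" and p: "prime p"
    and ndvd: "\<not> p ^ 2 dvd card K"
  shows "\<exists>k\<in>K. \<exists>e. inv' k \<circ> d \<circ> k = c ^^ e"
proof (rule ccontr)
  assume no_conj: "\<not> ?thesis"
  have p0: "0 < p"
    using p prime_gt_0_nat by blast
  have card_dc: "card (double_coset d k c) = p ^ 2" if "k \<in> K" for k
    using card_image[OF inj_on_double_coset_param[OF perm_group_on_permutes[OF G that] d c c_order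
          p]] no_conj that double_coset_image[OF d c p0]
    by (auto simp: power2_eq_square)
  have dc_subset: "double_coset d k c \<subseteq> K" if "k \<in> K" for k
    unfolding double_coset_def
    using perm_group_on_comp[OF G] perm_group_on_funpow[OF G] that cK dK by blast
  have "p ^ 2 * card ((\<lambda>k. double_coset d k c) ` K) = card (\<Union>k\<in>K. double_coset d k c)"
  proof (rule card_partition)
    show "finite (\<Union>k\<in>K. double_coset d k c)"
      using dc_subset fin by (meson UN_least finite_subset)
    show "\<And>X Y. X \<in> (\<lambda>k. double_coset d k c) ` K \<Longrightarrow> Y \<in> (\<lambda>k. double_coset d k c) ` K
        \<Longrightarrow> X \<noteq> Y \<Longrightarrow> X \<inter> Y = {}"
      using double_coset_eq[OF d c p0] by blast
  qed (use fin card_dc in auto)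
  also have "(\<Union>k\<in>K. double_coset d k c) = K"
    using dc_subset double_coset_self by blast
  finally show False
    using ndvd by (metis dvd_triv_left)
qed

section \<open>Three-cycles\<close>

lemma semiconj_funpow:
  assumes "\<And>x. h (c x) = (c ^^ e) (h x)"
  shows "h ((c ^^ j) x) = (c ^^ (e * j)) (h x)"
proof (induction j)
  case (Suc j)
  then show ?case
    using assms by (simp add: funpow_add)
qed simp

lemma semiconj_inv:
  assumes "h permutes \<Omega>" "\<And>y. h (a y) = b (h y)"
  shows "inv' h (b z) = a (inv' h z)"
proof -
  have "h (a (inv' h z)) = b z"
    using assms(2)[of "inv' h z"] permutes_inverses(1)[OF assms(1)] by simp
  then show ?thesis
    using permutes_inverses(2)[OF assms(1)] by metis
qed

lemma commutator_semiconj_commutes: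
  assumes h\<^sub>1: "h\<^sub>1 permutes \<Omega>" "\<And>x. h\<^sub>1 (c x) = (c ^^ e\<^sub>1) (h\<^sub>1 x)"
    and h\<^sub>2: "h\<^sub>2 permutes \<Omega>" "\<And>x. h\<^sub>2 (c x) = (c ^^ e\<^sub>2) (h\<^sub>2 x)"
  shows "(inv' h\<^sub>1 \<circ> inv' h\<^sub>2 \<circ> h\<^sub>1 \<circ> h\<^sub>2) (c x) = c ((inv' h\<^sub>1 \<circ> inv' h\<^sub>2 \<circ> h\<^sub>1 \<circ> h\<^sub>2) x)"
proof -
  have "h\<^sub>1 (h\<^sub>2 (c x)) = h\<^sub>1 ((c ^^ e\<^sub>2) (h\<^sub>2 x))"
    by (simp only: h\<^sub>2(2))
  also have "\<dots> = (c ^^ (e\<^sub>2 * e\<^sub>1)) (h\<^sub>1 (h\<^sub>2 x))"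
    using semiconj_funpow[where h = h\<^sub>1 and c = c and e = e\<^sub>1 and j = e\<^sub>2, OF h\<^sub>1(2)]
    by (simp only: mult.commute)
  finally have A: "h\<^sub>1 (h\<^sub>2 (c x)) = (c ^^ (e\<^sub>2 * e\<^sub>1)) (h\<^sub>1 (h\<^sub>2 x))" .
  have B: "inv' h\<^sub>2 ((c ^^ (e\<^sub>2 * e\<^sub>1)) y) = (c ^^ e\<^sub>1) (inv' h\<^sub>2 y)" for y
    using semiconj_funpow[where h = h\<^sub>2 and c = c and e = e\<^sub>2 and j = e\<^sub>1, OF h\<^sub>2(2)]
    by (rule semiconj_inv[OF h\<^sub>2(1), where a = "c ^^ e\<^sub>1" and b = "c ^^ (e\<^sub>2 * e\<^sub>1)"])
  have C: "inv' h\<^sub>1 ((c ^^ e\<^sub>1) y) = c (inv' h\<^sub>1 y)" for y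
    by (rule semiconj_inv[OF h\<^sub>1(1), where a = c and b = "c ^^ e\<^sub>1"]) (rule h\<^sub>1(2))
  show ?thesis
    by (simp only: comp_apply A B C)
qed

lemma commuting_funpow_cycle_length:
  assumes cy: "is_cycle c D p" and comm: "\<And>x. w (c x) = c (w x)"
    and wD: "\<And>x. x \<in> D \<Longrightarrow> w x \<in> D" and x: "x \<in> D"
  shows "(w ^^ p) x = x"
proof -
  have comm_pow: "w ((c ^^ i) y) = (c ^^ i) (w y)" for i y
    using semiconj_funpow[of w c 1] comm by simp
  obtain j where j: "(c ^^ j) x = w x"
    using is_cycle_connects[OF cy x wD[OF x]] by blast
  have on_D: "w y = (c ^^ j) y" if y: "y \<in> D" for y
  proof -
    obtain i where i: "(c ^^ i) x = y"
      using is_cycle_connects[OF cy x y] by blast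
    have "w y = (c ^^ i) ((c ^^ j) x)"
      using i j comm_pow by metis
    also have "\<dots> = (c ^^ j) y"
      using i by (metis funpow_add add.commute comp_apply)
    finally show ?thesis .
  qed
  have "(w ^^ k) x = (c ^^ (j * k)) x" for k
  proof (induction k)
    case (Suc k)
    then show ?case
      using on_D is_cycle_funpow_in[OF cy x] by (simp add: funpow_add)
  qed simp
  moreover have "c ^^ p = id"
    using cy by (simp add: is_cycle_def)
  then have "c ^^ (j * p) = id"
    by (simp only: mult.commute[of j] funpow_mult[symmetric]) simp
  ultimately show ?thesis
    by simp
qed

text \<open>A permutation commuting with \<open>c\<close> acts on the support of \<open>c\<close> as a power of \<open>c\<close>,
  so its \<open>p\<close>-th power only sees what it does off the support.\<close>

lemma funpow_cycle_length_eq: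
  assumes w: "w permutes \<Omega>" and \<rho>: "\<rho> permutes \<Omega> - D" and cy: "is_cycle c D p"
    and D: "D \<subseteq> \<Omega>"
    and comm: "\<And>x. w (c x) = c (w x)" and agree: "\<And>\<gamma>. \<gamma> \<in> \<Omega> - D \<Longrightarrow> w \<gamma> = \<rho> \<gamma>"
  shows "w ^^ p = \<rho> ^^ p"
proof
  fix x
  have wD: "w x \<in> D" if "x \<in> D" for x
  proof (rule ccontr)
    assume "w x \<notin> D"
    moreover have "w x \<in> \<Omega>"
      using that D permutes_in_image[OF w] by blast
    ultimately have "inv' \<rho> (w x) \<in> \<Omega> - D"
      using permutes_in_image[OF permutes_inv[OF \<rho>]] by blast
    then have "w (inv' \<rho> (w x)) = w x"
      using agree permutes_inverses(1)[OF \<rho>] by metis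
    then have "inv' \<rho> (w x) = x"
      using permutes_inj[OF w] by (meson injD)
    then show False
      using \<open>inv' \<rho> (w x) \<in> \<Omega> - D\<close> that by simp
  qed
  have fix_D: "(\<rho> ^^ k) x = x" if "x \<notin> \<Omega> - D" for k
    using that permutes_not_in[OF \<rho>] by (induction k) auto
  consider "x \<in> D" | "x \<in> \<Omega> - D" | "x \<notin> \<Omega>" "x \<notin> D"
    by blast
  then show "(w ^^ p) x = (\<rho> ^^ p) x"
  proof cases
    case 1
    then show ?thesis
      using commuting_funpow_cycle_length[where w = w, OF cy comm wD] fix_D by simp
  next
    case 2
    have "(w ^^ k) x = (\<rho> ^^ k) x \<and> (\<rho> ^^ k) x \<in> \<Omega> - D" for k
      using 2 agree permutes_in_image[OF \<rho>] by (induction k) auto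
    then show ?thesis by blast
  next
    case 3
    have "(w ^^ k) x = x" for k
      using 3 permutes_not_in[OF w] by (induction k) auto
    then show ?thesis
      using fix_D 3 by simp
  qed
qed

lemma inv_apply_transpose_on:
  assumes G: "perm_group_on \<Omega> H" and gH: "g \<in> H"
    and g: "\<And>\<gamma>. \<gamma> \<in> \<Gamma> \<Longrightarrow> g \<gamma> = transpose a b \<gamma>" and ab: "a \<in> \<Gamma>" "b \<in> \<Gamma>"
    and \<gamma>: "\<gamma> \<in> \<Gamma>"
  shows "inv' g \<gamma> = transpose a b \<gamma>"
proof -
  have "transpose a b \<gamma> \<in> \<Gamma>"
    using \<gamma> ab by (auto simp: transpose_def)
  then show ?thesis
    using g perm_group_on_inv_apply[OF G gH] by (metis transpose_involutory)
qed

lemma conj_cycle_pointwise_stab: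
  assumes G: "perm_group_on \<Omega> H" and gH: "g \<in> H" and cH: "c \<in> H" and cy: "is_cycle c D p"
    and g: "\<And>\<gamma>. \<gamma> \<in> \<Omega> - D \<Longrightarrow> g \<gamma> = transpose a b \<gamma>" and ab: "a \<in> \<Omega> - D" "b \<in> \<Omega> - D"
  shows "g \<circ> c \<circ> inv' g \<in> pointwise_stab H (\<Omega> - D)" and "(g \<circ> c \<circ> inv' g) ^^ p = id"
proof -
  have t: "transpose a b \<gamma> \<in> \<Omega> - D" if "\<gamma> \<in> \<Omega> - D" for \<gamma>
    using that ab by (auto simp: transpose_def)
  have g_inv: "inv' g \<gamma> = transpose a b \<gamma>" if "\<gamma> \<in> \<Omega> - D" for \<gamma>
    by (rule inv_apply_transpose_on[OF G gH _ ab that]) (rule g)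
  have "(g \<circ> c \<circ> inv' g) \<gamma> = \<gamma>" if "\<gamma> \<in> \<Omega> - D" for \<gamma>
    using that g_inv g t cy by (simp add: is_cycle_def)
  moreover have "g \<circ> c \<circ> inv' g \<in> H"
    using G gH cH perm_group_on_comp perm_group_on_inv by blast
  ultimately show "g \<circ> c \<circ> inv' g \<in> pointwise_stab H (\<Omega> - D)"
    by (simp add: pointwise_stab_def)
  have gp: "g permutes \<Omega>"
    using perm_group_on_permutes[OF G gH] .
  have "(g \<circ> c \<circ> inv' g) ^^ p = g \<circ> c ^^ p \<circ> inv' g"
    by (rule funpow_conj) (simp_all add: permutes_inv_o[OF gp])
  then show "(g \<circ> c \<circ> inv' g) ^^ p = id"
    using cy permutes_inv_o[OF gp] by (simp add: is_cycle_def)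
qed

text \<open>By the Sylow-type argument, the conjugate of \<open>c\<close> by an element acting as a transposition
  off the support can be moved back into \<open>\<langle>c\<rangle>\<close> inside the pointwise stabiliser of that
  complement.\<close>

lemma ex_normaliser_transpose:
  assumes G: "perm_group_on \<Omega> H" and fin: "finite H" and cH: "c \<in> H"
    and cy: "is_cycle c D p" and p: "prime p"
    and ndvd: "\<not> p ^ 2 dvd card (pointwise_stab H (\<Omega> - D))"
    and tr: "\<And>S. S \<subseteq> \<Omega> - D \<Longrightarrow> transitive_on (\<Omega> - S) (pointwise_stab H S)"
    and ab: "a \<in> \<Omega> - D" "b \<in> \<Omega> - D" "a \<noteq> b"
  shows "\<exists>h\<in>H. \<exists>e. (\<forall>x. h (c x) = (c ^^ e) (h x)) \<and> (\<forall>\<gamma>\<in>\<Omega> - D. h \<gamma> = transpose a b \<gamma>)"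
proof -
  define K where "K = pointwise_stab H (\<Omega> - D)"
  obtain g where gH: "g \<in> H" and g: "\<And>\<gamma>. \<gamma> \<in> \<Omega> - D \<Longrightarrow> g \<gamma> = transpose a b \<gamma>"
    using ex_transpose_on[OF G tr _ ab] by blast
  define d where "d = g \<circ> c \<circ> inv' g"
  have dK: "d \<in> K" and dp: "d ^^ p = id"
    using conj_cycle_pointwise_stab[OF G gH cH cy g ab(1,2)] unfolding d_def K_def by blast+
  have cK: "c \<in> K"
    using cH cy by (simp add: K_def pointwise_stab_def is_cycle_def)
  have cp: "c ^^ p = id"
    using cy by (simp add: is_cycle_def)
  have "perm_group_on (\<Omega> - (\<Omega> - D)) K"
    unfolding K_def by (rule perm_group_on_pointwise_stab[OF G])
  moreover have "finite K"
    unfolding K_def using fin pointwise_stab_subset finite_subset by metis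
  ultimately obtain k e where kK: "k \<in> K" and ke: "inv' k \<circ> d \<circ> k = c ^^ e"
    using ex_conj_into_cyclic[OF _ _ cK dK cp dp is_cycle_funpow_neq_id[OF cy] p] ndvd
    unfolding K_def by blast
  then have kH: "k \<in> H" and k_fix: "\<And>\<gamma>. \<gamma> \<in> \<Omega> - D \<Longrightarrow> k \<gamma> = \<gamma>"
    by (auto simp: K_def pointwise_stab_def)
  define h where "h = inv' k \<circ> g"
  have "h \<in> H"
    unfolding h_def using G kH gH perm_group_on_comp perm_group_on_inv by blast
  moreover have "h (c x) = (c ^^ e) (h x)" for x
  proof -
    have "(c ^^ e) (h x) = inv' k (d (k (inv' k (g x))))"
      using ke unfolding h_def by (metis comp_apply)
    also have "\<dots> = inv' k (g (c x))"
      unfolding d_def by (simp add: perm_group_on_apply_inv[OF G kH] perm_group_on_inv_apply[OF G gH])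
    finally show ?thesis
      by (simp add: h_def)
  qed
  moreover have "h \<gamma> = transpose a b \<gamma>" if "\<gamma> \<in> \<Omega> - D" for \<gamma>
  proof -
    have "transpose a b \<gamma> \<in> \<Omega> - D"
      using that ab by (auto simp: transpose_def)
    then show ?thesis
      using g[OF that] k_fix perm_group_on_inv_apply[OF G kH] unfolding h_def by (metis comp_apply)
  qed
  ultimately show ?thesis
    by blast
qed

lemma transpose_commutator:
  assumes "a \<noteq> b" "a \<noteq> c" "b \<noteq> c"
  shows "transpose a b \<circ> transpose b c \<circ> transpose a b \<circ> transpose b c = cycle_of_list [a, c, b]"
  using assms by (auto simp: fun_eq_iff transpose_def)

lemma three_cycle_funpow_3:
  assumes "a \<noteq> b" "a \<noteq> c" "b \<noteq> c"
  shows "cycle_of_list [a, b, c] ^^ 3 = id"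
  using assms by (auto simp: fun_eq_iff transpose_def numeral_3_eq_3)

lemma commutator_transpose_on:
  assumes G: "perm_group_on \<Omega> H" and h\<^sub>1H: "h\<^sub>1 \<in> H" and h\<^sub>2H: "h\<^sub>2 \<in> H"
    and h\<^sub>1: "\<And>\<gamma>. \<gamma> \<in> \<Gamma> \<Longrightarrow> h\<^sub>1 \<gamma> = transpose \<gamma>\<^sub>1 \<gamma>\<^sub>2 \<gamma>"
    and h\<^sub>2: "\<And>\<gamma>. \<gamma> \<in> \<Gamma> \<Longrightarrow> h\<^sub>2 \<gamma> = transpose \<gamma>\<^sub>2 \<gamma>\<^sub>3 \<gamma>"
    and \<gamma>: "\<gamma>\<^sub>1 \<in> \<Gamma>" "\<gamma>\<^sub>2 \<in> \<Gamma>" "\<gamma>\<^sub>3 \<in> \<Gamma>" "\<gamma>\<^sub>1 \<noteq> \<gamma>\<^sub>2" "\<gamma>\<^sub>1 \<noteq> \<gamma>\<^sub>3" "\<gamma>\<^sub>2 \<noteq> \<gamma>\<^sub>3"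
    and x: "x \<in> \<Gamma>"
  shows "(inv' h\<^sub>1 \<circ> inv' h\<^sub>2 \<circ> h\<^sub>1 \<circ> h\<^sub>2) x = cycle_of_list [\<gamma>\<^sub>1, \<gamma>\<^sub>3, \<gamma>\<^sub>2] x"
proof -
  have t\<^sub>1: "transpose \<gamma>\<^sub>1 \<gamma>\<^sub>2 y \<in> \<Gamma>" and t\<^sub>2: "transpose \<gamma>\<^sub>2 \<gamma>\<^sub>3 y \<in> \<Gamma>" if "y \<in> \<Gamma>" for y
    using that \<gamma> by (auto simp: transpose_def)
  have h\<^sub>1_inv: "inv' h\<^sub>1 y = transpose \<gamma>\<^sub>1 \<gamma>\<^sub>2 y" if "y \<in> \<Gamma>" for y
    by (rule inv_apply_transpose_on[OF G h\<^sub>1H _ \<gamma>(1,2) that]) (rule h\<^sub>1)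
  have h\<^sub>2_inv: "inv' h\<^sub>2 y = transpose \<gamma>\<^sub>2 \<gamma>\<^sub>3 y" if "y \<in> \<Gamma>" for y
    by (rule inv_apply_transpose_on[OF G h\<^sub>2H _ \<gamma>(2,3) that]) (rule h\<^sub>2)
  have "h\<^sub>2 x = transpose \<gamma>\<^sub>2 \<gamma>\<^sub>3 x"
    by (rule h\<^sub>2[OF x])
  moreover have "h\<^sub>1 (transpose \<gamma>\<^sub>2 \<gamma>\<^sub>3 x) = transpose \<gamma>\<^sub>1 \<gamma>\<^sub>2 (transpose \<gamma>\<^sub>2 \<gamma>\<^sub>3 x)"
    by (rule h\<^sub>1[OF t\<^sub>2[OF x]])
  moreover have "inv' h\<^sub>2 (transpose \<gamma>\<^sub>1 \<gamma>\<^sub>2 (transpose \<gamma>\<^sub>2 \<gamma>\<^sub>3 x)) = transpose \<gamma>\<^sub>2 \<gamma>\<^sub>3 (transpose \<gamma>\<^sub>1 \<gamma>\<^sub>2 (transpose \<gamma>\<^sub>2 \<gamma>\<^sub>3 x))"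
    by (rule h\<^sub>2_inv[OF t\<^sub>1[OF t\<^sub>2[OF x]]])
  moreover have "inv' h\<^sub>1 (transpose \<gamma>\<^sub>2 \<gamma>\<^sub>3 (transpose \<gamma>\<^sub>1 \<gamma>\<^sub>2 (transpose \<gamma>\<^sub>2 \<gamma>\<^sub>3 x)))
      = transpose \<gamma>\<^sub>1 \<gamma>\<^sub>2 (transpose \<gamma>\<^sub>2 \<gamma>\<^sub>3 (transpose \<gamma>\<^sub>1 \<gamma>\<^sub>2 (transpose \<gamma>\<^sub>2 \<gamma>\<^sub>3 x)))"
    by (rule h\<^sub>1_inv[OF t\<^sub>2[OF t\<^sub>1[OF t\<^sub>2[OF x]]]])
  ultimately have "(inv' h\<^sub>1 \<circ> inv' h\<^sub>2 \<circ> h\<^sub>1 \<circ> h\<^sub>2) x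
      = (transpose \<gamma>\<^sub>1 \<gamma>\<^sub>2 \<circ> transpose \<gamma>\<^sub>2 \<gamma>\<^sub>3 \<circ> transpose \<gamma>\<^sub>1 \<gamma>\<^sub>2 \<circ> transpose \<gamma>\<^sub>2 \<gamma>\<^sub>3) x"
    by simp
  then show ?thesis
    using transpose_commutator[OF \<gamma>(4-6)] by simp
qed

text \<open>The commutator of two normalisers of \<open>\<langle>c\<rangle>\<close> acting as overlapping transpositions off the
  support commutes with \<open>c\<close>; its \<open>p\<close>-th power is therefore a power of a three-cycle.\<close>

lemma three_cycle_mem:
  assumes G: "perm_group_on \<Omega> H" and fin: "finite H" and cH: "c \<in> H"
    and cy: "is_cycle c D p" and D: "D \<subseteq> \<Omega>" and p: "prime p" "p \<noteq> 3"
    and ndvd: "\<not> p ^ 2 dvd card (pointwise_stab H (\<Omega> - D))"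
    and tr: "\<And>S. S \<subseteq> \<Omega> - D \<Longrightarrow> transitive_on (\<Omega> - S) (pointwise_stab H S)"
    and \<gamma>: "\<gamma>\<^sub>1 \<in> \<Omega> - D" "\<gamma>\<^sub>2 \<in> \<Omega> - D" "\<gamma>\<^sub>3 \<in> \<Omega> - D" "\<gamma>\<^sub>1 \<noteq> \<gamma>\<^sub>2" "\<gamma>\<^sub>1 \<noteq> \<gamma>\<^sub>3" "\<gamma>\<^sub>2 \<noteq> \<gamma>\<^sub>3"
  shows "cycle_of_list [\<gamma>\<^sub>1, \<gamma>\<^sub>3, \<gamma>\<^sub>2] \<in> H"
proof -
  obtain h\<^sub>1 e\<^sub>1 where h\<^sub>1H: "h\<^sub>1 \<in> H" and h\<^sub>1c: "\<And>x. h\<^sub>1 (c x) = (c ^^ e\<^sub>1) (h\<^sub>1 x)"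
    and h\<^sub>1: "\<And>\<gamma>. \<gamma> \<in> \<Omega> - D \<Longrightarrow> h\<^sub>1 \<gamma> = transpose \<gamma>\<^sub>1 \<gamma>\<^sub>2 \<gamma>"
    using ex_normaliser_transpose[OF G fin cH cy p(1) ndvd tr \<gamma>(1,2,4)] by blast
  obtain h\<^sub>2 e\<^sub>2 where h\<^sub>2H: "h\<^sub>2 \<in> H" and h\<^sub>2c: "\<And>x. h\<^sub>2 (c x) = (c ^^ e\<^sub>2) (h\<^sub>2 x)"
    and h\<^sub>2: "\<And>\<gamma>. \<gamma> \<in> \<Omega> - D \<Longrightarrow> h\<^sub>2 \<gamma> = transpose \<gamma>\<^sub>2 \<gamma>\<^sub>3 \<gamma>"
    using ex_normaliser_transpose[OF G fin cH cy p(1) ndvd tr \<gamma>(2,3,6)] by blast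
  define w where "w = inv' h\<^sub>1 \<circ> inv' h\<^sub>2 \<circ> h\<^sub>1 \<circ> h\<^sub>2"
  define \<rho> where "\<rho> = cycle_of_list [\<gamma>\<^sub>1, \<gamma>\<^sub>3, \<gamma>\<^sub>2]"
  have wH: "w \<in> H"
    unfolding w_def
    by (intro perm_group_on_comp[OF G] perm_group_on_inv[OF G] h\<^sub>1H h\<^sub>2H)
  have "w \<gamma> = \<rho> \<gamma>" if "\<gamma> \<in> \<Omega> - D" for \<gamma>
    unfolding w_def \<rho>_def using commutator_transpose_on[OF G h\<^sub>1H h\<^sub>2H h\<^sub>1 h\<^sub>2 \<gamma> that] .
  moreover have "\<rho> permutes \<Omega> - D"
    unfolding \<rho>_def using cycle_permutes[of "[\<gamma>\<^sub>1, \<gamma>\<^sub>3, \<gamma>\<^sub>2]"] \<gamma>(1-3)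
    by (auto intro: permutes_subset)
  ultimately have "w ^^ p = \<rho> ^^ p"
    using funpow_cycle_length_eq[OF perm_group_on_permutes[OF G wH] _ cy D]
      commutator_semiconj_commutes[OF perm_group_on_permutes[OF G h\<^sub>1H] h\<^sub>1c
        perm_group_on_permutes[OF G h\<^sub>2H] h\<^sub>2c]
    unfolding w_def by blast
  then have \<rho>pH: "\<rho> ^^ p \<in> H"
    using perm_group_on_funpow[OF G wH, of p] by simp
  have "\<not> 3 dvd p"
    using p unfolding prime_nat_iff by force
  moreover have "\<rho> ^^ 3 = id"
    unfolding \<rho>_def using \<gamma>(4-6) by (intro three_cycle_funpow_3) auto
  ultimately obtain r where "(\<rho> ^^ p) ^^ r = \<rho>"
    using funpow_prime_generates[where f = \<rho> and p = 3 and k = p] by auto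
  then show ?thesis
    using perm_group_on_funpow[OF G \<rho>pH, of r] \<rho>_def by simp
qed

section \<open>A cycle of prime length inside a permutation\<close>

lemma funpow_card_orbit:
  assumes "permutation f"
  shows "(f ^^ card (orbit f y)) y = y" and "0 < card (orbit f y)"
proof -
  have y: "y \<in> orbit f y"
    using permutation_self_in_orbit[OF assms] .
  have "card (orbit f y) = funpow_dist1 f y y"
    using card_image[OF inj_on_funpow_dist1[OF y]] orbit_conv_funpow_dist1[OF y] by simp
  then show "(f ^^ card (orbit f y)) y = y" and "0 < card (orbit f y)"
    using funpow_dist1_prop[OF y] by simp_all
qed

lemma funpow_fact_fixes:
  assumes "permutation f" and "card (orbit f y) \<le> m"
  shows "(f ^^ fact m) y = y"
proof -
  have "card (orbit f y) dvd fact m"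
    using funpow_card_orbit(2)[OF assms(1), of y] assms(2) by (intro dvd_fact) auto
  then have "fact m mod card (orbit f y) = 0"
    by simp
  then show ?thesis
    using funpow_mod_eq[OF funpow_card_orbit(1)[OF assms(1), where y = y], of "fact m"] by simp
qed

lemma not_prime_square_dvd_fact:
  assumes p: "prime p" and n: "n < 2 * p"
  shows "\<not> p ^ 2 dvd fact n"
proof (cases "p \<le> n")
  case True
  show ?thesis
  proof
    assume "p ^ 2 dvd fact n"
    have p0: "0 < p" using p prime_gt_0_nat by blast
    have "(fact n :: nat) = p * \<Prod>({1..n} - {p})"
      using prod.remove[of "{1..n}" p id] True p0 by (simp add: fact_prod)
    then have "p dvd \<Prod>({1..n} - {p})"
      using \<open>p ^ 2 dvd fact n\<close> p0 by (simp add: power2_eq_square)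
    then have "\<exists>i\<in>{1..n} - {p}. p dvd i"
      using prime_dvd_prod_iff[of "{1..n} - {p}" p "\<lambda>x. x"] p by simp
    then obtain i q where i: "i \<in> {1..n} - {p}" "i = p * q"
      by (metis dvdE)
    then have "q \<noteq> 0" "q \<noteq> 1"
      by auto
    then have "2 \<le> q"
      by linarith
    then have "p * 2 \<le> i"
      unfolding i(2) by (rule mult_le_mono2)
    moreover have "i \<le> n"
      using i(1) by simp
    ultimately show False
      using n by linarith
  qed
next
  case False
  then have "\<not> p dvd fact n"
    using prime_dvd_fact_iff[OF p] by simp
  then show ?thesis
    using dvd_trans[of p "p ^ 2" "fact n"] by (auto simp: power2_eq_square)
qed

lemma funpow_prime_period_reaches:
  assumes period: "(f ^^ p) x = x" and p: "prime p" and L: "\<not> p dvd L"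
  shows "\<exists>i. ((f ^^ L) ^^ i) x = (f ^^ m) x"
proof -
  obtain r where r: "L * r mod p = 1"
    using prime_mod_inverse[OF p L] by blast
  have "((f ^^ L) ^^ (r * m)) x = (f ^^ (L * r * m mod p)) x"
    using funpow_mod_eq[where f = f and n = p, OF period] by (simp add: funpow_mult mult.assoc)
  also have "L * r * m mod p = m mod p"
    using mod_mult_left_eq[of "L * r" p m] r by simp
  also have "(f ^^ (m mod p)) x = (f ^^ m) x"
    using funpow_mod_eq[where f = f and n = p, OF period] .
  finally show ?thesis ..
qed

lemma funpow_fact_fixes_other_orbits:
  assumes \<pi>: "\<pi> permutes \<Omega>" and fin: "finite \<Omega>" and x: "x \<in> \<Omega>"
    and y: "y \<notin> orbit \<pi> x"
  shows "(\<pi> ^^ fact (card \<Omega> - card (orbit \<pi> x))) y = y"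
proof (cases "y \<in> \<Omega>")
  case True
  have perm: "permutation \<pi>"
    using \<pi> fin by (auto simp: permutation_permutes)
  have "orbit \<pi> y \<subseteq> \<Omega> - orbit \<pi> x"
  proof
    fix z assume z: "z \<in> orbit \<pi> y"
    have "orbit \<pi> z = orbit \<pi> y"
      using orbit_cyclic_eq3[OF cyclic_on_orbit'[OF perm] z] .
    moreover have "orbit \<pi> z = orbit \<pi> x" if "z \<in> orbit \<pi> x"
      using orbit_cyclic_eq3[OF cyclic_on_orbit'[OF perm] that] .
    ultimately have "z \<notin> orbit \<pi> x"
      using permutation_self_in_orbit[OF perm, of y] y by auto
    then show "z \<in> \<Omega> - orbit \<pi> x"
      using permutes_orbit_subset[OF \<pi> True] z by blast
  qed
  then have "card (orbit \<pi> y) \<le> card (\<Omega> - orbit \<pi> x)"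
    using fin by (simp add: card_mono)
  also have "\<dots> = card \<Omega> - card (orbit \<pi> x)"
    using permutes_orbit_subset[OF \<pi> x] fin by (simp add: card_Diff_subset finite_subset)
  finally show ?thesis
    using funpow_fact_fixes[OF perm] by blast
next
  case False
  have "(\<pi> ^^ k) y = y" for k
    using permutes_not_in[OF \<pi> False] by (induction k) auto
  then show ?thesis .
qed

text \<open>Raising \<open>\<pi>\<close> to the power \<open>(|\<Omega>| - p)!\<close> kills every other cycle of \<open>\<pi>\<close>, all of which have
  length at most \<open>|\<Omega>| - p\<close>, while \<open>p\<close> does not divide the exponent.\<close>

lemma is_cycle_funpow_fact:
  assumes \<pi>: "\<pi> permutes \<Omega>" and fin: "finite \<Omega>" and x: "x \<in> \<Omega>"
    and orb: "card (orbit \<pi> x) = p" and p: "prime p" and \<Omega>: "card \<Omega> < 2 * p"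
  shows "is_cycle (\<pi> ^^ fact (card \<Omega> - p)) (orbit \<pi> x) p"
proof -
  define Ob where "Ob = orbit \<pi> x"
  define L where "L = (fact (card \<Omega> - p) :: nat)"
  define c where "c = \<pi> ^^ L"
  have perm: "permutation \<pi>"
    using \<pi> fin by (auto simp: permutation_permutes)
  have Ob: "finite Ob" "card Ob = p"
    using permutes_orbit_subset[OF \<pi> x] fin finite_subset orb by (auto simp: Ob_def)
  have xOb: "x \<in> Ob"
    using permutation_self_in_orbit[OF perm] Ob_def by simp
  have period: "(\<pi> ^^ p) y = y" if "y \<in> Ob" for y
  proof -
    have "orbit \<pi> y = Ob"
      using orbit_cyclic_eq3[OF cyclic_on_orbit'[OF perm] that[unfolded Ob_def]] Ob_def by simp
    then show ?thesis
      using funpow_card_orbit(1)[OF perm, of y] Ob(2) by simp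
  qed
  have L: "\<not> p dvd L"
    using prime_dvd_fact_iff[OF p] \<Omega> unfolding L_def by simp
  have fixes_off: "c y = y" if "y \<notin> Ob" for y
    using funpow_fact_fixes_other_orbits[OF \<pi> fin x] that orb unfolding c_def L_def Ob_def by simp
  have "c ^^ p = id"
  proof
    fix y
    show "(c ^^ p) y = id y"
    proof (cases "y \<in> Ob")
      case True
      have "(c ^^ p) y = ((\<pi> ^^ p) ^^ L) y"
        unfolding c_def by (simp add: funpow_mult mult.commute)
      also have "\<dots> = y"
        using period[OF True] by (induction L) auto
      finally show ?thesis by simp
    next
      case False
      then show ?thesis
        using fixes_off by (induction p) auto
    qed
  qed
  moreover have "c y \<in> Ob" if "y \<in> Ob" for y
    using funpow_in_orbit[of y \<pi> x] that unfolding c_def Ob_def by simp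
  moreover have "\<exists>i. (c ^^ i) x = y" if "y \<in> Ob" for y
    using that funpow_prime_period_reaches[OF period[OF xOb] p L] unfolding c_def Ob_def orbit_altdef
    by blast
  ultimately have "is_cycle c Ob p"
    using fixes_off Ob xOb unfolding is_cycle_def by blast
  then show ?thesis
    by (simp add: c_def L_def Ob_def)
qed

section \<open>Generating the alternating group\<close>

lemma perm_group_on_iff_subgroup:
  "perm_group_on {1..n} K \<longleftrightarrow> subgroup K (sym_group n)"
proof
  assume G: "perm_group_on {1..n} K"
  show "subgroup K (sym_group n)"
  proof (rule group.subgroupI[OF sym_group_is_group])
    show "K \<subseteq> carrier (sym_group n)"
      using perm_group_on_permutes[OF G] by (auto simp: sym_group_carrier)
    show "K \<noteq> {}"
      using perm_group_on_id[OF G] by blast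
    show "inv\<^bsub>sym_group n\<^esub> a \<in> K" if "a \<in> K" for a
      using perm_group_on_inv[OF G that] perm_group_on_permutes[OF G that]
      by (simp add: sym_group_carrier)
    show "a \<otimes>\<^bsub>sym_group n\<^esub> b \<in> K" if "a \<in> K" "b \<in> K" for a b
      using perm_group_on_comp[OF G that] by (simp add: sym_group_mult)
  qed
next
  assume K: "subgroup K (sym_group n)"
  then have "K \<subseteq> carrier (sym_group n)"
    by (rule subgroup.subset)
  then show "perm_group_on {1..n} K"
    using subgroup.one_closed[OF K] subgroup.m_closed[OF K] subgroup.m_inv_closed[OF K]
    by (auto simp: perm_group_on_def sym_group_one sym_group_mult sym_group_carrier subset_iff)
qed

lemma perm_group_on_card_dvd_fact:
  assumes "perm_group_on {1..n} K"
  shows "card K dvd fact n"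
proof -
  have "card (rcosets\<^bsub>sym_group n\<^esub> K) * card K = order (sym_group n)"
    using group.lagrange[OF sym_group_is_group] assms perm_group_on_iff_subgroup by blast
  then show ?thesis
    using sym_group_card_carrier[of n] unfolding order_def by (metis dvd_triv_right)
qed

lemma three_cycles_subset:
  assumes G: "perm_group_on {1..n} H"
    and tr: "\<And>S. S \<subseteq> \<Gamma> \<Longrightarrow> transitive_on ({1..n} - S) (pointwise_stab H S)"
    and \<Gamma>: "\<Gamma> \<subseteq> {1..n}" and abc: "a \<in> \<Gamma>" "b \<in> \<Gamma>" "c \<in> \<Gamma>" "a \<noteq> b" "a \<noteq> c" "b \<noteq> c"
    and cH: "cycle_of_list [a, b, c] \<in> H"
  shows "three_cycles n \<subseteq> H"
proof
  fix q assume "q \<in> three_cycles n"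
  then obtain cs where cs: "q = cycle_of_list cs" "cycle cs" "length cs = 3" "set cs \<subseteq> {1..n}"
    by blast
  then obtain x y z where "cs = [x, y, z]"
    using stupid_lemma by blast
  then have q: "q = cycle_of_list [x, y, z]" and xyz: "cycle [x, y, z]" "set [x, y, z] \<subseteq> {1..n}"
    using cs by simp_all
  have "x \<in> {1..n}" "y \<in> {1..n}" "z \<in> {1..n}" "x \<noteq> y" "x \<noteq> z" "y \<noteq> z"
    using xyz by auto
  then obtain f where fH: "f \<in> H" and f: "f x = a" "f y = b" "f z = c"
    using three_transitive[OF G tr \<Gamma> abc] by blast
  have bij: "bij f"
    using permutes_bij[OF perm_group_on_permutes[OF G fH]] .
  have "map (inv' f) [a, b, c] = [x, y, z]"
    using f perm_group_on_inv_apply[OF G fH] by auto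
  then have "q = inv' f \<circ> cycle_of_list [a, b, c] \<circ> f"
    using conjugation_of_cycle[of "[a, b, c]" "inv' f"] abc bij_imp_bij_inv[OF bij]
      inv_inv_eq[OF bij] q by simp
  then show "q \<in> H"
    using perm_group_on_comp[OF G perm_group_on_comp[OF G perm_group_on_inv[OF G fH] cH] fH]
    by simp
qed

lemma alt_group_transitive:
  assumes "3 \<le> n"
  shows "transitive_on_Sn n (carrier (alt_group n))"
  unfolding transitive_on_Sn_def
proof (intro ballI)
  fix x y assume x: "x \<in> {1..n}" and y: "y \<in> {1..n}"
  show "\<exists>g\<in>carrier (alt_group n). g x = y"
  proof (cases "x = y")
    case True
    moreover have "id \<in> carrier (alt_group n)"
      by (simp add: alt_group_carrier permutes_id evenperm_id)
    ultimately show ?thesis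
      by (metis id_apply)
  next
    case False
    have "card {x, y} \<le> 2"
      by (simp add: card_insert_if)
    then have "card ({1..n} - {x, y}) \<noteq> 0"
      using x y assms by (simp add: card_Diff_subset)
    then obtain z where z: "z \<in> {1..n} - {x, y}"
      by (metis all_not_in_conv card.empty)
    then have "cycle_of_list [x, y, z] \<in> three_cycles n"
      using x y False by (auto intro!: exI[of _ "[x, y, z]"])
    moreover have "cycle_of_list [x, y, z] x = y"
      using False z by (auto simp: transpose_def)
    ultimately show ?thesis
      using three_cycles_incl by blast
  qed
qed

lemma generate_in_alt_group:
  assumes "S \<subseteq> carrier (alt_group n)"
  shows "subgroup (generate (sym_group n) S) (sym_group n)"
    and "generate (sym_group n) S \<subseteq> carrier (alt_group n)"
proof -
  show "subgroup (generate (sym_group n) S) (sym_group n)"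
    using assms subgroup.subset[OF alt_group_is_subgroup]
    by (intro group.generate_is_subgroup[OF sym_group_is_group]) blast
  show "generate (sym_group n) S \<subseteq> carrier (alt_group n)"
    using assms by (rule group.generate_subgroup_incl[OF sym_group_is_group _ alt_group_is_subgroup])
qed

lemma eq_alt_group_if_three_cycles:
  assumes G: "subgroup G (sym_group n)" and GA: "G \<subseteq> carrier (alt_group n)"
    and three: "three_cycles n \<subseteq> G"
  shows "G = carrier (alt_group n)"
proof -
  have "subgroup G (alt_group n)"
    using group.subgroup_incl[OF sym_group_is_group G alt_group_is_subgroup GA]
    by (simp add: alt_group_def)
  then have "generate (alt_group n) (three_cycles n) \<subseteq> G"
    using three by (rule group.generate_subgroup_incl[OF alt_group_is_group, rotated])
  then show ?thesis
    using alt_group_carrier_as_three_cycles GA by blast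
qed

theorem generate_eq_alt_group_if_transitive:
  fixes n p :: nat and \<pi> \<sigma> :: "nat \<Rightarrow> nat"
  assumes p: "prime p" "n < 2 * p" "p + 3 \<le> n"
    and \<pi>: "\<pi> \<in> carrier (alt_group n)" and \<sigma>: "\<sigma> \<in> carrier (alt_group n)"
    and x: "x \<in> {1..n}" "card (orbit \<pi> x) = p"
    and tr: "transitive_on_Sn n (generate (sym_group n) {\<pi>, \<sigma>})"
  shows "generate (sym_group n) {\<pi>, \<sigma>} = carrier (alt_group n)"
proof -
  define G where "G = generate (sym_group n) {\<pi>, \<sigma>}"
  define D where "D = orbit \<pi> x"
  define c where "c = \<pi> ^^ fact (n - p)"
  have subG: "subgroup G (sym_group n)" and GA: "G \<subseteq> carrier (alt_group n)"
    using generate_in_alt_group[of "{\<pi>, \<sigma>}" n] \<pi> \<sigma> unfolding G_def by auto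
  have PG: "perm_group_on {1..n} G"
    using subG perm_group_on_iff_subgroup by blast
  have finG: "finite G"
    using finite_subset[OF _ finite_permutations[of "{1..n}"]] perm_group_on_permutes[OF PG]
    by blast
  have \<pi>p: "\<pi> permutes {1..n}"
    using \<pi> by (simp add: alt_group_carrier)
  have cy: "is_cycle c D p"
    using is_cycle_funpow_fact[OF \<pi>p _ x p(1)] p(2) unfolding c_def D_def by simp
  have D: "D \<subseteq> {1..n}"
    using permutes_orbit_subset[OF \<pi>p x(1)] D_def by simp
  have cG: "c \<in> G"
    unfolding c_def G_def by (intro perm_group_on_funpow[OF PG[unfolded G_def]] generate.incl) simp
  have stab_tr: "\<And>S. S \<subseteq> {1..n} - D \<Longrightarrow> transitive_on ({1..n} - S) (pointwise_stab G S)"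
    using transitive_on_pointwise_stab_off_cycle[OF PG _ _ cG cy D p(1)] tr p(2)
    unfolding transitive_on_Sn_def transitive_on_def G_def by simp
  have "perm_group_on {1..n} (pointwise_stab G ({1..n} - D))"
    using perm_group_on_pointwise_stab[OF PG, of "{1..n} - D"] D
    by (auto intro: perm_group_on_mono)
  then have ndvd: "\<not> p ^ 2 dvd card (pointwise_stab G ({1..n} - D))"
    using perm_group_on_card_dvd_fact not_prime_square_dvd_fact[OF p(1,2)] dvd_trans by blast
  have "card ({1..n} - D) = n - p"
    using cy D by (simp add: card_Diff_subset is_cycle_def)
  then obtain \<Gamma> where "\<Gamma> \<subseteq> {1..n} - D" "card \<Gamma> = 3"
    using obtain_subset_with_card_n[of 3 "{1..n} - D"] p(3) by force
  then obtain \<gamma>\<^sub>1 \<gamma>\<^sub>2 \<gamma>\<^sub>3 where \<gamma>: "\<gamma>\<^sub>1 \<in> {1..n} - D" "\<gamma>\<^sub>2 \<in> {1..n} - D" "\<gamma>\<^sub>3 \<in> {1..n} - D"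
    "\<gamma>\<^sub>1 \<noteq> \<gamma>\<^sub>2" "\<gamma>\<^sub>1 \<noteq> \<gamma>\<^sub>3" "\<gamma>\<^sub>2 \<noteq> \<gamma>\<^sub>3"
    unfolding card_3_iff by auto
  have "p \<noteq> 3"
    using p(2,3) by linarith
  then have "cycle_of_list [\<gamma>\<^sub>1, \<gamma>\<^sub>3, \<gamma>\<^sub>2] \<in> G"
    using three_cycle_mem[OF PG finG cG cy D p(1) _ ndvd stab_tr \<gamma>] by blast
  then have "three_cycles n \<subseteq> G"
    using three_cycles_subset[OF PG stab_tr _ \<gamma>(1,3,2)] \<gamma>(4-6) by blast
  then show ?thesis
    using eq_alt_group_if_three_cycles[OF subG GA] G_def by blast
qed

theorem corollary5p3:
  fixes n p :: nat and \<pi> :: "nat \<Rightarrow> nat" and C :: "(nat \<Rightarrow> nat) set"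
  assumes "prime p" and "n < 2 * p" and "p + 3 \<le> n"
    and "\<pi> \<in> carrier (alt_group n)"
    and "\<exists>x\<in>{1..n}. card (orbit \<pi> x) = p"
    and "is_conj_class_Sn n C"
  shows "card {\<sigma> \<in> carrier (alt_group n). commutator_Sn n \<pi> \<sigma> \<in> C \<and>
                 generate (sym_group n) {\<pi>, \<sigma>} = carrier (alt_group n)}
       = card {\<sigma> \<in> carrier (alt_group n). commutator_Sn n \<pi> \<sigma> \<in> C}
         - card {\<sigma> \<in> carrier (alt_group n). commutator_Sn n \<pi> \<sigma> \<in> C \<and>
                 \<not> transitive_on_Sn n (generate (sym_group n) {\<pi>, \<sigma>})}"
proof -
  let ?gen = "\<lambda>\<sigma>. generate (sym_group n) {\<pi>, \<sigma>}"
  have "?gen \<sigma> = carrier (alt_group n) \<longleftrightarrow> transitive_on_Sn n (?gen \<sigma>)"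
    if "\<sigma> \<in> carrier (alt_group n)" for \<sigma>
    using generate_eq_alt_group_if_transitive[OF assms(1-4) that] assms(5)
      alt_group_transitive[of n] assms(3) by fastforce
  then have "{\<sigma> \<in> carrier (alt_group n). commutator_Sn n \<pi> \<sigma> \<in> C \<and> ?gen \<sigma> = carrier (alt_group n)}
      = {\<sigma> \<in> carrier (alt_group n). commutator_Sn n \<pi> \<sigma> \<in> C}
        - {\<sigma> \<in> carrier (alt_group n). commutator_Sn n \<pi> \<sigma> \<in> C \<and> \<not> transitive_on_Sn n (?gen \<sigma>)}"
    by blast
  moreover have "finite (carrier (alt_group n))"
    using finite_permutations[of "{1..n}"] by (rule finite_subset[rotated]) (auto simp: alt_group_carrier)
  ultimately show ?thesis
    by (simp only:) (rule card_Diff_subset; auto)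
qed
end
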